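(* For every $f>0$, the minimum possible root-mean-square size of a planar configuration with cohesion $f$ is $$\min\{b(\mathbf r):\ \mathbf r\in\mathfrak R,\ f(\mathbf r)=f\}=\frac{C(\mathbf m)}{f\sqrt{\sum_j m_j}},$$ and this minimum is achieved on every trajectory $\mathbf r_\lambda(t)$ ($\lambda>0$, generated by any minimizer of $f+\lambda g$), i.e. $b(\mathbf r_\lambda(t))=\frac{C(\mathbf m)}{f(\mathbf r_\lambda(t))\sqrt{\sum_j m_j}}$ for all $t\ge0$.
   Context: Fix $N\ge 2$, masses $\mathbf m=(m_1,\dots,m_N)$, $m_i>0$, and $\gamma>0$. Planar configuration space $\mathfrak R=\{\mathbf r=(\mathbf r_1,\dots,\mathbf r_N)\in(\mathbb R^2)^N:\ \mathbf r_i\neq\mathbf r_j \text{ for } i\neq j\}$; cohesion $f(\mathbf r)=\sum_{i<j}\frac{\gamma m_im_j}{|\mathbf r_j-\mathbf r_i|}$; $g(\mathbf r)=\sum_i m_i|\mathbf r_i|^2$; root-mean-square size $b(\mathbf r)=\sqrt{\sum_i\beta_i|\mathbf r_i|^2}$ with $\beta_i=m_i/\sum_j m_j$ (so $g=b^2\sum_jm_j$). Let $C(\mathbf m)=\min\{f(\mathbf r):\mathbf r\in\mathfrak R,\ g(\mathbf r)=1\}$. For $\lambda>0$ and a minimizer $\mathbf r_\lambda=(\mathbf r_{1\lambda},\dots,\mathbf r_{N\lambda})$ of $f+\lambda g$ on $\mathfrak R$, with $\mathbf r_{i\lambda}=|\mathbf r_{i\lambda}|(\cos\varphi_{i\lambda},\sin\varphi_{i\lambda})$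 and $\omega=\sqrt{2\lambda}$, the trajectory $\mathbf r_\lambda(t)$ has components $\mathbf r_{i\lambda}(t)=|\mathbf r_{i\lambda}|(\cos(\varphi_{i\lambda}+\omega t),\sin(\varphi_{i\lambda}+\omega t))$, $t\ge0$. *)

theory Defs
  imports "HOL-Analysis.Analysis"
begin

text \<open>Planar configurations of N bodies: points r 0, ..., r (N-1) in the plane
  (real \<times> real), only indices i < N are relevant.\<close>

type_synonym config = "nat \<Rightarrow> real \<times> real"

definition in_config_space :: "nat \<Rightarrow> config \<Rightarrow> bool" where
  "in_config_space N r \<longleftrightarrow> (\<forall>i<N. \<forall>j<N. i \<noteq> j \<longrightarrow> r i \<noteq> r j)"

definition cohesion :: "nat \<Rightarrow> (nat \<Rightarrow> real) \<Rightarrow> real \<Rightarrow> config \<Rightarrow> real" where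
  "cohesion N m \<gamma> r =
     (\<Sum>j<N. \<Sum>i<j. \<gamma> * m i * m j / norm (r j - r i))"

definition gfun :: "nat \<Rightarrow> (nat \<Rightarrow> real) \<Rightarrow> config \<Rightarrow> real" where
  "gfun N m r = (\<Sum>i<N. m i * (norm (r i))\<^sup>2)"

definition total_mass :: "nat \<Rightarrow> (nat \<Rightarrow> real) \<Rightarrow> real" where
  "total_mass N m = (\<Sum>j<N. m j)"

definition rms_size :: "nat \<Rightarrow> (nat \<Rightarrow> real) \<Rightarrow> config \<Rightarrow> real" where
  "rms_size N m r = sqrt (\<Sum>i<N. (m i / total_mass N m) * (norm (r i))\<^sup>2)"

text \<open>C(m) = min of the cohesion over configurations with g = 1 (written as Inf,
  which coincides with the minimum whenever it is attained).\<close>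
definition Cm :: "nat \<Rightarrow> (nat \<Rightarrow> real) \<Rightarrow> real \<Rightarrow> real" where
  "Cm N m \<gamma> = Inf {cohesion N m \<gamma> r | r. in_config_space N r \<and> gfun N m r = 1}"

definition trajectory :: "nat \<Rightarrow> config \<Rightarrow> (nat \<Rightarrow> real) \<Rightarrow> real \<Rightarrow> real \<Rightarrow> config" where
  "trajectory N r \<phi> \<omega> t =
     (\<lambda>i. (norm (r i) * cos (\<phi> i + \<omega> * t), norm (r i) * sin (\<phi> i + \<omega> * t)))"

end

theory Submission
  imports Defs
begin

text \<open>The cohesion f is homogeneous of degree -1 and g of degree 2, so f \<cdot> \<surd>g is
  invariant under scaling and C(m) is its infimum over the whole configuration space. Since
  b = \<surd>(g / \<Sum>m), every configuration satisfies b \<ge> C(m) / (f \<surd>(\<Sum>m)), with equality exactly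
  at the minimizers of f \<cdot> \<surd>g; these exist by compactness, and rescaling one of them
  realizes any prescribed cohesion. A minimizer of f + \<lambda>g minimizes f on its own level set
  of g, hence by scaling minimizes f \<cdot> \<surd>g; the trajectory is a rigid rotation of it
  and so has the same f and g.\<close>

definition scale_config :: "real \<Rightarrow> config \<Rightarrow> config" where
  "scale_config s r = (\<lambda>i. s *\<^sub>R r i)"

lemma in_config_space_scale:
  "s \<noteq> 0 \<Longrightarrow> in_config_space N (scale_config s r) \<longleftrightarrow> in_config_space N r"
  by (simp add: in_config_space_def scale_config_def)

lemma cohesion_scale:
  assumes "s > 0"
  shows "cohesion N m \<gamma> (scale_config s r) = cohesion N m \<gamma> r / s"
proof -
  have "norm (scale_config s r j - scale_config s r i) = s * norm (r j - r i)" for i j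
    using assms by (simp add: scale_config_def flip: scaleR_diff_right)
  then show ?thesis
    by (simp add: cohesion_def sum_divide_distrib mult.commute)
qed

lemma gfun_scale: "gfun N m (scale_config s r) = s\<^sup>2 * gfun N m r"
  by (simp add: gfun_def scale_config_def sum_distrib_left power_mult_distrib algebra_simps)

lemma cohesion_mul_sqrt_gfun_scale:
  "s > 0 \<Longrightarrow> cohesion N m \<gamma> (scale_config s r) * sqrt (gfun N m (scale_config s r))
    = cohesion N m \<gamma> r * sqrt (gfun N m r)"
  by (simp add: cohesion_scale gfun_scale real_sqrt_mult)

lemma cohesion_cong:
  "(\<And>i. i < N \<Longrightarrow> r i = r' i) \<Longrightarrow> cohesion N m \<gamma> r = cohesion N m \<gamma> r'"
  unfolding cohesion_def by (intro sum.cong refl) auto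

lemma gfun_cong:
  "(\<And>i. i < N \<Longrightarrow> r i = r' i) \<Longrightarrow> gfun N m r = gfun N m r'"
  unfolding gfun_def by (intro sum.cong refl) auto

lemma rms_size_eq: "rms_size N m r = sqrt (gfun N m r) / sqrt (total_mass N m)"
  unfolding rms_size_def gfun_def real_sqrt_divide [symmetric] sum_divide_distrib by simp

lemma total_mass_pos: "N > 0 \<Longrightarrow> \<forall>i<N. m i > 0 \<Longrightarrow> total_mass N m > 0"
  unfolding total_mass_def by (rule sum_pos) auto

lemma cohesion_nonneg: "\<forall>i<N. m i \<ge> 0 \<Longrightarrow> \<gamma> \<ge> 0 \<Longrightarrow> cohesion N m \<gamma> r \<ge> 0"
  unfolding cohesion_def by (intro sum_nonneg divide_nonneg_nonneg mult_nonneg_nonneg) auto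

lemma cohesion_term_le:
  assumes m_nonneg: "\<forall>i<N. m i \<ge> 0" and "\<gamma> \<ge> 0" and "i < N" "j < N" "i \<noteq> j"
  shows "\<gamma> * m i * m j / norm (r j - r i) \<le> cohesion N m \<gamma> r"
proof -
  have summand_le: "\<gamma> * m a * m b / norm (r b - r a) \<le> cohesion N m \<gamma> r"
    if "a < b" "b < N" for a b
  proof -
    have nonneg: "0 \<le> \<gamma> * m a' * m b' / norm (r b' - r a')" if "a' < N" "b' < N" for a' b'
      using that m_nonneg \<open>\<gamma> \<ge> 0\<close> by simp
    have "\<gamma> * m a * m b / norm (r b - r a) \<le> (\<Sum>a'<b. \<gamma> * m a' * m b / norm (r b - r a'))"
      by (rule member_le_sum) (use that nonneg in auto)
    also have "\<dots> \<le> cohesion N m \<gamma> r"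
      unfolding cohesion_def by (rule member_le_sum) (use that nonneg in \<open>auto intro!: sum_nonneg\<close>)
    finally show ?thesis .
  qed
  show ?thesis
  proof (cases "i < j")
    case True
    then show ?thesis using summand_le \<open>j < N\<close> by blast
  next
    case False
    then have "\<gamma> * m j * m i / norm (r i - r j) \<le> cohesion N m \<gamma> r"
      using summand_le \<open>i < N\<close> \<open>i \<noteq> j\<close> by simp
    then show ?thesis by (simp add: norm_minus_commute mult_ac)
  qed
qed

lemma norm_diff_ge_of_cohesion_le:
  assumes "\<forall>i<N. m i \<ge> 0" "\<gamma> \<ge> 0" "i < N" "j < N" "i \<noteq> j"
    and "in_config_space N r" "cohesion N m \<gamma> r \<le> K" "K > 0"
  shows "\<gamma> * m i * m j / K \<le> norm (r j - r i)"
proof -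
  have "0 < norm (r j - r i)"
    using assms(3-6) by (auto simp: in_config_space_def)
  moreover have "\<gamma> * m i * m j / norm (r j - r i) \<le> K"
    using cohesion_term_le[OF assms(1-5), of r] assms(7) by linarith
  ultimately show ?thesis
    using \<open>K > 0\<close> by (simp add: field_simps)
qed

lemma cohesion_pos:
  assumes "N \<ge> 2" "\<forall>i<N. m i > 0" "\<gamma> > 0" "in_config_space N r"
  shows "cohesion N m \<gamma> r > 0"
proof -
  have "r 1 \<noteq> r 0"
    using assms unfolding in_config_space_def by auto
  then have "0 < \<gamma> * m 0 * m 1 / norm (r 1 - r 0)"
    using assms by auto
  also have "\<dots> \<le> cohesion N m \<gamma> r"
    using assms by (intro cohesion_term_le) (auto simp: less_imp_le)
  finally show ?thesis .
qed

lemma gfun_pos: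
  assumes "N \<ge> 2" "\<forall>i<N. m i > 0" "in_config_space N r"
  shows "gfun N m r > 0"
proof -
  have "r 1 \<noteq> r 0"
    using assms unfolding in_config_space_def by auto
  then obtain k :: nat where k: "k \<in> {0, 1}" "r k \<noteq> 0"
    by (cases "r 0 = 0") auto
  then have "k < N"
    using assms(1) by auto
  have "0 < m k * (norm (r k))\<^sup>2"
    using k \<open>k < N\<close> assms by auto
  also have "\<dots> \<le> gfun N m r"
    unfolding gfun_def by (rule member_le_sum) (use \<open>k < N\<close> assms in auto)
  finally show ?thesis .
qed

definition normalize_config :: "nat \<Rightarrow> (nat \<Rightarrow> real) \<Rightarrow> config \<Rightarrow> config" where
  "normalize_config N m r = scale_config (1 / sqrt (gfun N m r)) r"

lemma
  assumes "N \<ge> 2" "\<forall>i<N. m i > 0" "in_config_space N r"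
  shows in_config_space_normalize: "in_config_space N (normalize_config N m r)"
    and gfun_normalize: "gfun N m (normalize_config N m r) = 1"
    and cohesion_normalize:
      "cohesion N m \<gamma> (normalize_config N m r) = cohesion N m \<gamma> r * sqrt (gfun N m r)"
  using gfun_pos[OF assms] assms(3)
  by (simp_all add: normalize_config_def in_config_space_scale gfun_scale cohesion_scale power_divide)

lemma Cm_le:
  assumes "N \<ge> 2" "\<forall>i<N. m i > 0" "\<gamma> > 0" "in_config_space N r"
  shows "Cm N m \<gamma> \<le> cohesion N m \<gamma> r * sqrt (gfun N m r)"
proof -
  have "\<forall>i<N. m i \<ge> 0"
    using assms(2) by (simp add: less_imp_le)
  then have "bdd_below {cohesion N m \<gamma> r | r. in_config_space N r \<and> gfun N m r = 1}"
    using cohesion_nonneg assms(3) by (auto intro!: bdd_belowI[where m=0])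
  moreover have "cohesion N m \<gamma> r * sqrt (gfun N m r)
      \<in> {cohesion N m \<gamma> r | r. in_config_space N r \<and> gfun N m r = 1}"
    using in_config_space_normalize[OF assms(1,2,4)] gfun_normalize[OF assms(1,2,4)]
      cohesion_normalize[OF assms(1,2,4), of \<gamma>] by force
  ultimately show ?thesis
    unfolding Cm_def by (rule cInf_lower[rotated])
qed

lemma Cm_eq_of_min_on_level:
  assumes "N \<ge> 2" "\<forall>i<N. m i > 0" "\<gamma> > 0" "in_config_space N r0"
    and min_on_level: "\<And>r. in_config_space N r \<Longrightarrow> gfun N m r = gfun N m r0 \<Longrightarrow>
      cohesion N m \<gamma> r0 \<le> cohesion N m \<gamma> r"
  shows "Cm N m \<gamma> = cohesion N m \<gamma> r0 * sqrt (gfun N m r0)"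
proof (rule antisym)
  show "Cm N m \<gamma> \<le> cohesion N m \<gamma> r0 * sqrt (gfun N m r0)"
    using Cm_le assms(1-4) by blast
  have g0: "gfun N m r0 > 0"
    using gfun_pos assms by blast
  have "{cohesion N m \<gamma> r | r. in_config_space N r \<and> gfun N m r = 1} \<noteq> {}"
    using assms(1,2,4) in_config_space_normalize gfun_normalize by blast
  then show "cohesion N m \<gamma> r0 * sqrt (gfun N m r0) \<le> Cm N m \<gamma>"
    unfolding Cm_def
  proof (rule cInf_greatest)
    fix c assume "c \<in> {cohesion N m \<gamma> r | r. in_config_space N r \<and> gfun N m r = 1}"
    then obtain r where r: "in_config_space N r" "gfun N m r = 1" "c = cohesion N m \<gamma> r"
      by blast
    let ?s = "sqrt (gfun N m r0)"
    have "cohesion N m \<gamma> r0 \<le> cohesion N m \<gamma> (scale_config ?s r)"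
      using r g0 by (intro min_on_level) (simp_all add: in_config_space_scale gfun_scale)
    then show "cohesion N m \<gamma> r0 * ?s \<le> c"
      using g0 r(3) by (simp add: cohesion_scale pos_le_divide_eq)
  qed
qed

lemma Cm_eq_of_min_cohesion_plus_gfun:
  assumes "N \<ge> 2" "\<forall>i<N. m i > 0" "\<gamma> > 0" "in_config_space N r0"
    and "\<forall>r. in_config_space N r \<longrightarrow>
      cohesion N m \<gamma> r0 + lam * gfun N m r0 \<le> cohesion N m \<gamma> r + lam * gfun N m r"
  shows "Cm N m \<gamma> = cohesion N m \<gamma> r0 * sqrt (gfun N m r0)"
  using assms by (intro Cm_eq_of_min_on_level) force+

lemma rms_size_ge_Cm_div:
  assumes "N \<ge> 2" "\<forall>i<N. m i > 0" "\<gamma> > 0" "in_config_space N r"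
  shows "Cm N m \<gamma> / (cohesion N m \<gamma> r * sqrt (total_mass N m)) \<le> rms_size N m r"
proof -
  have "cohesion N m \<gamma> r > 0" "total_mass N m > 0"
    using cohesion_pos[OF assms] total_mass_pos assms(1,2) by simp_all
  with Cm_le[OF assms] show ?thesis
    by (simp add: rms_size_eq field_simps)
qed

lemma rms_size_eq_Cm_div:
  assumes "cohesion N m \<gamma> r \<noteq> 0" "Cm N m \<gamma> = cohesion N m \<gamma> r * sqrt (gfun N m r)"
  shows "rms_size N m r = Cm N m \<gamma> / (cohesion N m \<gamma> r * sqrt (total_mass N m))"
  using assms by (simp add: rms_size_eq)

lemma compact_Pi_UNIV:
  fixes K :: "'i \<Rightarrow> 'a::topological_space set"
  assumes "\<And>i. compact (K i)"
  shows "compact (Pi UNIV K)"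
proof -
  have "compactin (product_topology (\<lambda>_. euclidean) UNIV) (PiE UNIV K)"
    using assms by (simp add: compactin_PiE)
  then show ?thesis
    by (simp add: euclidean_product_topology PiE_UNIV_domain)
qed

lemma continuous_on_coordinate: "continuous_on S (\<lambda>r. r i :: 'a::topological_space)"
  by (rule continuous_on_subset[OF continuous_on_product_coordinates]) simp

lemma closed_pairwise_norm_diff_ge:
  fixes c :: "'i \<Rightarrow> 'i \<Rightarrow> real"
  shows "closed {r :: 'i \<Rightarrow> 'a::real_normed_vector.
    \<forall>i\<in>I. \<forall>j\<in>I. i \<noteq> j \<longrightarrow> c i j \<le> norm (r j - r i)}"
proof -
  have "closed {r :: 'i \<Rightarrow> 'a. c i j \<le> norm (r j - r i)}" for i j
    by (intro closed_Collect_le continuous_intros continuous_on_coordinate)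
  then have "closed (\<Inter>i\<in>I. \<Inter>j\<in>I - {i}. {r :: 'i \<Rightarrow> 'a. c i j \<le> norm (r j - r i)})"
    by blast
  moreover have "(\<Inter>i\<in>I. \<Inter>j\<in>I - {i}. {r :: 'i \<Rightarrow> 'a. c i j \<le> norm (r j - r i)})
      = {r. \<forall>i\<in>I. \<forall>j\<in>I. i \<noteq> j \<longrightarrow> c i j \<le> norm (r j - r i)}"
    by auto
  ultimately show ?thesis
    by simp
qed

lemma closed_gfun_level: "closed {r. gfun N m r = c}"
  unfolding gfun_def
  by (intro closed_Collect_eq continuous_intros continuous_on_coordinate)

lemma continuous_on_cohesion: "continuous_on {r. in_config_space N r} (cohesion N m \<gamma>)"
  unfolding cohesion_def
  by (intro continuous_intros continuous_on_coordinate)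
     (auto simp: in_config_space_def)

lemma norm_le_sqrt_gfun_div:
  assumes "\<forall>j<N. m j \<ge> 0" "i < N" "m i > 0"
  shows "norm (r i) \<le> sqrt (gfun N m r / m i)"
proof -
  have "m i * (norm (r i))\<^sup>2 \<le> gfun N m r"
    unfolding gfun_def by (rule member_le_sum) (use assms in auto)
  then have "(norm (r i))\<^sup>2 \<le> gfun N m r / m i"
    using assms(3) by (simp add: pos_le_divide_eq mult.commute)
  then show ?thesis
    by (simp add: real_le_rsqrt)
qed

definition truncate_config :: "nat \<Rightarrow> config \<Rightarrow> config" where
  "truncate_config N r = (\<lambda>i. if i < N then r i else 0)"

lemma truncate_config_eq: "i < N \<Longrightarrow> truncate_config N r i = r i"
  by (simp add: truncate_config_def)

text \<open>Entries with index \<ge> N are unconstrained, so sublevel sets of the cohesion are not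
  compact themselves; truncation moves them into a compact product of balls.\<close>

lemma compact_superset_of_cohesion_sublevel:
  assumes mpos: "\<forall>i<N. m i > 0" and "\<gamma> > 0" "K > 0"
  obtains S where "compact S" "S \<subseteq> {r. in_config_space N r \<and> gfun N m r = 1}"
    "\<And>r. in_config_space N r \<Longrightarrow> gfun N m r = 1 \<Longrightarrow> cohesion N m \<gamma> r \<le> K \<Longrightarrow>
      truncate_config N r \<in> S"
proof
  have m_nonneg: "\<forall>i<N. m i \<ge> 0"
    using mpos by (simp add: less_imp_le)
  define B :: "nat \<Rightarrow> (real \<times> real) set" where
    "B i = (if i < N then cball 0 (sqrt (1 / m i)) else {0})" for i
  define D where
    "D = {r :: config. \<forall>i\<in>{..<N}. \<forall>j\<in>{..<N}. i \<noteq> j \<longrightarrow> \<gamma> * m i * m j / K \<le> norm (r j - r i)}"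
  define S where "S = Pi UNIV B \<inter> {r. gfun N m r = 1} \<inter> D"
  show "compact S"
    unfolding S_def D_def
    by (intro compact_Int_closed compact_Pi_UNIV closed_gfun_level closed_pairwise_norm_diff_ge)
       (simp add: B_def)
  show "S \<subseteq> {r. in_config_space N r \<and> gfun N m r = 1}"
  proof safe
    fix r assume "r \<in> S"
    then show "gfun N m r = 1"
      by (simp add: S_def)
    show "in_config_space N r"
      unfolding in_config_space_def
    proof (intro allI impI)
      fix i j assume "i < N" "j < N" "i \<noteq> j"
      then have "0 < \<gamma> * m j * m i / K" "\<gamma> * m j * m i / K \<le> norm (r i - r j)"
        using \<open>r \<in> S\<close> mpos assms(2,3) by (auto simp: S_def D_def)
      then show "r i \<noteq> r j"
        by auto
    qed
  qed
  fix r assume r: "in_config_space N r" "gfun N m r = 1" "cohesion N m \<gamma> r \<le> K"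
  have "norm (r i) \<le> sqrt (1 / m i)" if "i < N" for i
    using norm_le_sqrt_gfun_div[OF m_nonneg that, where r=r] mpos that r(2) by simp
  then have "truncate_config N r \<in> Pi UNIV B"
    by (simp add: B_def truncate_config_def)
  moreover have "truncate_config N r \<in> D"
    using norm_diff_ge_of_cohesion_le[OF m_nonneg assms(2)[THEN less_imp_le] _ _ _ r(1,3) assms(3)]
    by (simp add: D_def truncate_config_def)
  moreover have "gfun N m (truncate_config N r) = gfun N m r"
    by (rule gfun_cong) (rule truncate_config_eq)
  ultimately show "truncate_config N r \<in> S"
    using r(2) by (simp add: S_def)
qed

lemma cohesion_min_on_unit_level_attained:
  assumes "N \<ge> 2" "\<forall>i<N. m i > 0" "\<gamma> > 0"
  obtains x where "in_config_space N x" "gfun N m x = 1"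
    "\<And>r. in_config_space N r \<Longrightarrow> gfun N m r = 1 \<Longrightarrow> cohesion N m \<gamma> x \<le> cohesion N m \<gamma> r"
proof -
  have "in_config_space N (\<lambda>i. (real i, 0))"
    by (simp add: in_config_space_def)
  then obtain r1 where r1: "in_config_space N r1" "gfun N m r1 = 1"
    using in_config_space_normalize[OF assms(1,2)] gfun_normalize[OF assms(1,2)] by blast
  define K where "K = cohesion N m \<gamma> r1"
  have "K > 0"
    using cohesion_pos[OF assms r1(1)] by (simp add: K_def)
  then obtain S where S: "compact S" "S \<subseteq> {r. in_config_space N r \<and> gfun N m r = 1}"
    and sublevel_in_S: "\<And>r. in_config_space N r \<Longrightarrow> gfun N m r = 1 \<Longrightarrow> cohesion N m \<gamma> r \<le> K \<Longrightarrow>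
      truncate_config N r \<in> S"
    using compact_superset_of_cohesion_sublevel[OF assms(2,3) \<open>K > 0\<close>] by blast
  have cohesion_truncate: "cohesion N m \<gamma> (truncate_config N r) = cohesion N m \<gamma> r" for r
    by (rule cohesion_cong) (rule truncate_config_eq)
  have "S \<noteq> {}"
    using sublevel_in_S[OF r1] by (auto simp: K_def)
  moreover have "continuous_on S (cohesion N m \<gamma>)"
    using continuous_on_subset[OF continuous_on_cohesion] S(2) by blast
  ultimately obtain x where x: "x \<in> S" "\<And>y. y \<in> S \<Longrightarrow> cohesion N m \<gamma> x \<le> cohesion N m \<gamma> y"
    using continuous_attains_inf[OF S(1)] by blast
  show thesis
  proof
    show "in_config_space N x" "gfun N m x = 1"
      using x(1) S(2) by auto
    fix r assume r: "in_config_space N r" "gfun N m r = 1"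
    show "cohesion N m \<gamma> x \<le> cohesion N m \<gamma> r"
    proof (cases "cohesion N m \<gamma> r \<le> K")
      case True
      then show ?thesis
        using x(2)[OF sublevel_in_S[OF r True]] cohesion_truncate by simp
    next
      case False
      then show ?thesis
        using x(2)[OF sublevel_in_S[OF r1]] cohesion_truncate by (simp add: K_def)
    qed
  qed
qed

lemma Cm_attained:
  assumes "N \<ge> 2" "\<forall>i<N. m i > 0" "\<gamma> > 0"
  obtains x where "in_config_space N x" "gfun N m x = 1" "cohesion N m \<gamma> x = Cm N m \<gamma>"
proof -
  obtain x where x: "in_config_space N x" "gfun N m x = 1"
    "\<And>r. in_config_space N r \<Longrightarrow> gfun N m r = 1 \<Longrightarrow> cohesion N m \<gamma> x \<le> cohesion N m \<gamma> r"
    using cohesion_min_on_unit_level_attained assms by blast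
  then have "Cm N m \<gamma> = cohesion N m \<gamma> x"
    using Cm_eq_of_min_on_level[OF assms x(1)] by simp
  then show thesis
    using that x(1,2) by simp
qed

definition rotate_plane :: "real \<Rightarrow> real \<times> real \<Rightarrow> real \<times> real" where
  "rotate_plane \<theta> p = (cos \<theta> * fst p - sin \<theta> * snd p, sin \<theta> * fst p + cos \<theta> * snd p)"

lemma rotate_plane_diff: "rotate_plane \<theta> p - rotate_plane \<theta> q = rotate_plane \<theta> (p - q)"
  by (simp add: rotate_plane_def algebra_simps)

lemma norm_rotate_plane: "norm (rotate_plane \<theta> p) = norm p"
proof -
  have "(cos \<theta> * a - sin \<theta> * b)\<^sup>2 + (sin \<theta> * a + cos \<theta> * b)\<^sup>2 = a\<^sup>2 + b\<^sup>2" for a b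
    using sin_cos_squared_add[of \<theta>] by algebra
  then show ?thesis
    by (simp add: rotate_plane_def norm_prod_def)
qed

lemma rotate_plane_polar:
  "rotate_plane \<theta> (a * cos \<phi>, a * sin \<phi>) = (a * cos (\<phi> + \<theta>), a * sin (\<phi> + \<theta>))"
  by (simp add: rotate_plane_def cos_add sin_add algebra_simps)

lemma cohesion_rotate_plane:
  "cohesion N m \<gamma> (\<lambda>i. rotate_plane \<theta> (r i)) = cohesion N m \<gamma> r"
  by (simp add: cohesion_def rotate_plane_diff norm_rotate_plane)

lemma gfun_rotate_plane: "gfun N m (\<lambda>i. rotate_plane \<theta> (r i)) = gfun N m r"
  by (simp add: gfun_def norm_rotate_plane)

lemma trajectory_eq_rotate_plane:
  assumes "\<forall>i<N. r0 i = (norm (r0 i) * cos (\<phi> i), norm (r0 i) * sin (\<phi> i))" "i < N"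
  shows "trajectory N r0 \<phi> \<omega> t i = rotate_plane (\<omega> * t) (r0 i)"
  using assms by (metis rotate_plane_polar trajectory_def)

lemma
  assumes "\<forall>i<N. r0 i = (norm (r0 i) * cos (\<phi> i), norm (r0 i) * sin (\<phi> i))"
  shows cohesion_trajectory: "cohesion N m \<gamma> (trajectory N r0 \<phi> \<omega> t) = cohesion N m \<gamma> r0"
    and gfun_trajectory: "gfun N m (trajectory N r0 \<phi> \<omega> t) = gfun N m r0"
proof -
  have "cohesion N m \<gamma> (trajectory N r0 \<phi> \<omega> t) = cohesion N m \<gamma> (\<lambda>i. rotate_plane (\<omega> * t) (r0 i))"
    "gfun N m (trajectory N r0 \<phi> \<omega> t) = gfun N m (\<lambda>i. rotate_plane (\<omega> * t) (r0 i))"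
    using trajectory_eq_rotate_plane[OF assms] by (auto intro: cohesion_cong gfun_cong)
  then show "cohesion N m \<gamma> (trajectory N r0 \<phi> \<omega> t) = cohesion N m \<gamma> r0"
    "gfun N m (trajectory N r0 \<phi> \<omega> t) = gfun N m r0"
    by (simp_all add: cohesion_rotate_plane gfun_rotate_plane)
qed

lemma exists_config_with_min_rms_size:
  assumes "N \<ge> 2" "\<forall>i<N. m i > 0" "\<gamma> > 0" "F > 0"
  shows "\<exists>r. in_config_space N r \<and> cohesion N m \<gamma> r = F \<and>
    rms_size N m r = Cm N m \<gamma> / (F * sqrt (total_mass N m))"
proof -
  obtain x where x: "in_config_space N x" "gfun N m x = 1" "cohesion N m \<gamma> x = Cm N m \<gamma>"
    using Cm_attained[OF assms(1-3)] .
  have "Cm N m \<gamma> > 0"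
    using cohesion_pos[OF assms(1-3) x(1)] x(3) by simp
  define r where "r = scale_config (Cm N m \<gamma> / F) x"
  have r: "in_config_space N r" "cohesion N m \<gamma> r = F"
    using x \<open>F > 0\<close> \<open>Cm N m \<gamma> > 0\<close> by (simp_all add: r_def in_config_space_scale cohesion_scale)
  moreover have "Cm N m \<gamma> = cohesion N m \<gamma> r * sqrt (gfun N m r)"
    using x \<open>F > 0\<close> \<open>Cm N m \<gamma> > 0\<close> cohesion_mul_sqrt_gfun_scale by (simp add: r_def)
  ultimately have "rms_size N m r = Cm N m \<gamma> / (F * sqrt (total_mass N m))"
    using rms_size_eq_Cm_div[of N m \<gamma> r] \<open>F > 0\<close> by simp
  with r show ?thesis
    by blast
qed

lemma rms_size_trajectory:
  assumes "N \<ge> 2" "\<forall>i<N. m i > 0" "\<gamma> > 0" "in_config_space N r0"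
    and "\<forall>r. in_config_space N r \<longrightarrow>
      cohesion N m \<gamma> r0 + lam * gfun N m r0 \<le> cohesion N m \<gamma> r + lam * gfun N m r"
    and polar: "\<forall>i<N. r0 i = (norm (r0 i) * cos (\<phi> i), norm (r0 i) * sin (\<phi> i))"
  shows "rms_size N m (trajectory N r0 \<phi> \<omega> t)
    = Cm N m \<gamma> / (cohesion N m \<gamma> (trajectory N r0 \<phi> \<omega> t) * sqrt (total_mass N m))"
proof (rule rms_size_eq_Cm_div)
  show "cohesion N m \<gamma> (trajectory N r0 \<phi> \<omega> t) \<noteq> 0"
    using cohesion_pos[OF assms(1-4)] cohesion_trajectory[OF polar] by simp
  show "Cm N m \<gamma> = cohesion N m \<gamma> (trajectory N r0 \<phi> \<omega> t) * sqrt (gfun N m (trajectory N r0 \<phi> \<omega> t))"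
    using Cm_eq_of_min_cohesion_plus_gfun[OF assms(1-5)]
    by (simp add: cohesion_trajectory[OF polar] gfun_trajectory[OF polar])
qed

theorem theorem4p3:
  fixes N :: nat and m :: "nat \<Rightarrow> real" and \<gamma> :: real
  assumes N2: "N \<ge> 2"
    and mpos: "\<forall>i<N. m i > 0"
    and gpos: "\<gamma> > 0"
  shows
    "(\<forall>F > 0.
        (\<exists>r. in_config_space N r \<and> cohesion N m \<gamma> r = F \<and>
             rms_size N m r = Cm N m \<gamma> / (F * sqrt (total_mass N m))) \<and>
        (\<forall>r. in_config_space N r \<and> cohesion N m \<gamma> r = F \<longrightarrow>
             Cm N m \<gamma> / (F * sqrt (total_mass N m)) \<le> rms_size N m r))
     \<and>
     (\<forall>lam > 0. \<forall>r0 \<phi>.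
        in_config_space N r0 \<and>
        (\<forall>r. in_config_space N r \<longrightarrow>
             cohesion N m \<gamma> r0 + lam * gfun N m r0 \<le> cohesion N m \<gamma> r + lam * gfun N m r) \<and>
        (\<forall>i<N. r0 i = (norm (r0 i) * cos (\<phi> i), norm (r0 i) * sin (\<phi> i)))
        \<longrightarrow>
        (\<forall>t \<ge> 0.
           rms_size N m (trajectory N r0 \<phi> (sqrt (2 * lam)) t) =
           Cm N m \<gamma> / (cohesion N m \<gamma> (trajectory N r0 \<phi> (sqrt (2 * lam)) t)
                        * sqrt (total_mass N m))))"
proof (intro conjI allI impI)
  fix F :: real assume "F > 0"
  then show "\<exists>r. in_config_space N r \<and> cohesion N m \<gamma> r = F \<and>
      rms_size N m r = Cm N m \<gamma> / (F * sqrt (total_mass N m))"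
    by (rule exists_config_with_min_rms_size[OF N2 mpos gpos])
next
  fix F :: real and r assume "in_config_space N r \<and> cohesion N m \<gamma> r = F"
  then show "Cm N m \<gamma> / (F * sqrt (total_mass N m)) \<le> rms_size N m r"
    using rms_size_ge_Cm_div[OF N2 mpos gpos] by blast
next
  fix lam :: real and r0 \<phi> t
  assume "in_config_space N r0 \<and>
    (\<forall>r. in_config_space N r \<longrightarrow>
      cohesion N m \<gamma> r0 + lam * gfun N m r0 \<le> cohesion N m \<gamma> r + lam * gfun N m r) \<and>
    (\<forall>i<N. r0 i = (norm (r0 i) * cos (\<phi> i), norm (r0 i) * sin (\<phi> i)))"
  then show "rms_size N m (trajectory N r0 \<phi> (sqrt (2 * lam)) t) =
      Cm N m \<gamma> / (cohesion N m \<gamma> (trajectory N r0 \<phi> (sqrt (2 * lam)) t) * sqrt (total_mass N m))"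
    using rms_size_trajectory[OF N2 mpos gpos] by blast
qed

end
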